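(* Assume $r(\alpha)=0$ for all $\alpha\in A$, that the support $\delta(G)$ of $G$ is a convex compact subset of $\mathbb{R}^{d+1}_+$, and let $\mu$ be a pacing function with values in $[0,\omega/B_{\min}]$ such that for every $(w,B)\in\delta(G)$, $\mu(w,B)$ is the unique minimizer of $t\mapsto q^\mu(w,B,t)$ over $[0,\omega/B_{\min}]$. Then $(w,B)\mapsto\mu(w,B)$ is continuous on $\delta(G)$.
   Context: Setting. Fix integers $n\ge 2$ and $d\ge 2$, and constants $U>0$, $B_{\min}>0$. Buyer types are $(w,B)\in\Theta:=(0,U)^d\times(B_{\min},U)$; $\Theta_w:=(0,U)^d$. Item types are $\alpha\in A\subset\mathbb{R}^d_{+}$ (strictly positive orthant); all sets carry the Lebesgue $\sigma$-algebra. $F$ is a probability distribution on $A$ with a density and $G$ a probability distribution on $\Theta$ with a density. Buyer $(w,B)$ values item $\alpha$ at $w^T\alpha$; $\omega>0$ is a constant with $w^T\alpha\le\omega$ for all $w\in\Theta_w,\alpha\in A$. Reserve prices $r\equiv0$. A pacing function is a measurable map $\mu$ from buyer types (here including $\delta(G)$) to $\mathbb{R}_{\ge0}$. For $\alpha\in A$, $\lambda^\mu_\alpha$ is the distribution of $w^T\alpha/(1+\mu(w,B))$ when $(w,B)\sim G$, and $H^\mu_\alpha$ the distribution of the maximum of $n-1$ i.i.d. draws from $\lambda^\mu_\alpha$; $H^\mu_\alpha(x):=\lambda^\mu_\alpha((-\infty,x])^{n-1}$. The dual function (with $r\equiv0$) is $q^\mu(w,B,t):=(1+t)\,\mathbb{E}_{\alpha\sim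 F}\big[\int_{0}^{w^T\alpha/(1+t)}H^\mu_\alpha(s)\,ds\big]+tB$. *)

theory Defs
  imports "HOL-Probability.Probability"
begin

type_synonym 'd buyer = "(real ^ 'd) \<times> real"

definition Theta :: "real \<Rightarrow> real \<Rightarrow> 'd::finite buyer set" where
  "Theta U Bmin = {(w, B). (\<forall>i. 0 < w $ i \<and> w $ i < U) \<and> Bmin < B \<and> B < U}"

definition Theta_w :: "real \<Rightarrow> (real ^ 'd::finite) set" where
  "Theta_w U = {w. \<forall>i. 0 < w $ i \<and> w $ i < U}"

definition supp :: "'a::metric_space measure \<Rightarrow> 'a set" where
  "supp M = {x. \<forall>e>0. emeasure M (ball x e) > 0}"

definition lam :: "'d::finite buyer measure \<Rightarrow> ('d buyer \<Rightarrow> real) \<Rightarrow> real ^ 'd \<Rightarrow> real measure" where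
  "lam G mu \<alpha> = distr G borel (\<lambda>(w, B). (w \<bullet> \<alpha>) / (1 + mu (w, B)))"

definition Hdist :: "nat \<Rightarrow> 'd::finite buyer measure \<Rightarrow> ('d buyer \<Rightarrow> real) \<Rightarrow> real ^ 'd \<Rightarrow> real \<Rightarrow> real" where
  "Hdist n G mu \<alpha> x = (measure (lam G mu \<alpha>) {..x}) ^ (n - 1)"

text \<open>Dual function with zero reserve prices.\<close>
definition qdual :: "nat \<Rightarrow> (real ^ 'd) measure \<Rightarrow> 'd::finite buyer measure \<Rightarrow> ('d buyer \<Rightarrow> real)
    \<Rightarrow> 'd buyer \<Rightarrow> real \<Rightarrow> real" where
  "qdual n F G mu x t = (case x of (w, B) \<Rightarrow>
     (1 + t) * (\<integral>\<alpha>. (LBINT s:{0..(w \<bullet> \<alpha>) / (1 + t)}. Hdist n G mu \<alpha> s) \<partial>F) + t * B)"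

end

theory Submission
  imports Defs
begin

(* A unique minimiser, over a compact interval, of a jointly continuous function has a closed
   graph and is therefore continuous (a special case of Berge's maximum theorem). So it suffices
   to show that q(x, t) is jointly continuous on supp G \<times> [0, \<omega>/B_min]. Since 0 \<le> H \<le> 1, the
   inner integral is 1-Lipschitz in its upper limit w\<^sup>T\<alpha>/(1+t); the valuation bound forces
   |\<alpha>| \<le> 2\<omega>/U, so this upper limit is Lipschitz in (w, t) uniformly in \<alpha> on the bounded
   set supp G, and so is its expectation over \<alpha>. *)

lemma continuous_on_unique_argmin:
  fixes q :: "'a::euclidean_space \<Rightarrow> 'b::euclidean_space \<Rightarrow> real"
  assumes T: "compact T" and q: "continuous_on (S \<times> T) (\<lambda>(x, t). q x t)"
    and m: "m \<in> S \<rightarrow> T"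
    and argmin: "\<And>x t. x \<in> S \<Longrightarrow> t \<in> T \<Longrightarrow> t \<noteq> m x \<Longrightarrow> q x (m x) < q x t"
  shows "continuous_on S m"
proof (cases "T = {}")
  case True
  with m have "S = {}" by blast
  then show ?thesis by simp
next
  case False
  have graph: "(\<lambda>x. (x, m x)) ` S = (\<Inter>s\<in>T. {p \<in> S \<times> T. q (fst p) (snd p) \<le> q (fst p) s})"
  proof (intro set_eqI iffI)
    fix p assume "p \<in> (\<Inter>s\<in>T. {p \<in> S \<times> T. q (fst p) (snd p) \<le> q (fst p) s})"
    moreover obtain x t where "p = (x, t)" by fastforce
    ultimately have p: "p = (x, t)" "x \<in> S" "t \<in> T" and min: "\<forall>s\<in>T. q x t \<le> q x s"
      using False by auto
    have "t = m x"
      using argmin[OF \<open>x \<in> S\<close> \<open>t \<in> T\<close>] min m p by (force simp: Pi_iff)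
    then show "p \<in> (\<lambda>x. (x, m x)) ` S" using p by auto
  qed (use argmin m in \<open>fastforce simp: less_imp_le\<close>)
  have "closedin (top_of_set (S \<times> T)) {p \<in> S \<times> T. q (fst p) (snd p) \<le> q (fst p) s}"
    if "s \<in> T" for s
  proof -
    have q': "continuous_on (S \<times> T) (\<lambda>p. q (fst p) (snd p))"
      using q by (simp add: case_prod_beta)
    have "continuous_on (S \<times> T) (\<lambda>p. q (fst (fst p, s)) (snd (fst p, s)))"
      using that by (intro continuous_on_compose2[OF q'] continuous_intros) auto
    with q' have "continuous_on (S \<times> T) (\<lambda>p. q (fst p) s - q (fst p) (snd p))"
      by (intro continuous_intros) auto
    from continuous_closedin_preimage[OF this closed_atLeast[of 0]]
    show ?thesis by (simp add: vimage_def Int_def)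
  qed
  then have "closedin (top_of_set (S \<times> T)) ((\<lambda>x. (x, m x)) ` S)"
    unfolding graph using False by blast
  then show ?thesis
    using continuous_closed_graph_eq[OF T m] by blast
qed

lemma set_integral_Icc_upper_lipschitz:
  fixes h :: "real \<Rightarrow> real"
  assumes h: "h \<in> borel_measurable borel" and bound: "\<And>s. \<bar>h s\<bar> \<le> K"
  shows "\<bar>(LBINT s:{0..c}. h s) - (LBINT s:{0..c'}. h s)\<bar> \<le> K * \<bar>c - c'\<bar>"
proof -
  have int: "integrable lborel (\<lambda>s. indicator {0..x} s *\<^sub>R h s)" for x
    using h bound by (intro integrableI_bounded_set_indicator[where B=K]) (auto simp: emeasure_lborel_Icc_eq)
  have "\<bar>(LBINT s:{0..c}. h s) - (LBINT s:{0..c'}. h s)\<bar>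
      = \<bar>\<integral>s. indicator {0..c} s *\<^sub>R h s - indicator {0..c'} s *\<^sub>R h s \<partial>lborel\<bar>"
    unfolding set_lebesgue_integral_def using int by simp
  also have "\<dots> \<le> (\<integral>s. K * indicator {min c c'..max c c'} s \<partial>lborel)"
  proof (rule integral_abs_bound[THEN order_trans], rule integral_mono)
    show "integrable lborel (\<lambda>s. K * indicator {min c c'..max c c'} s)"
      by (intro integrable_mult_right integrable_real_indicator) auto
    show "\<bar>indicator {0..c} s *\<^sub>R h s - indicator {0..c'} s *\<^sub>R h s\<bar>
        \<le> K * indicator {min c c'..max c c'} s" for s
      using bound[of s] by (auto simp: indicator_def)
  qed (use int in auto)
  also have "\<dots> = K * \<bar>c - c'\<bar>" by (simp add: abs_if min_def max_def)
  finally show ?thesis .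
qed

lemma Hdist_eq_measure:
  fixes G :: "'d::finite buyer measure"
  assumes G: "sets G = sets borel" and mu: "mu \<in> borel_measurable borel"
  shows "Hdist n G mu \<alpha> s = measure G {x. fst x \<bullet> \<alpha> / (1 + mu x) \<le> s} ^ (n - 1)"
proof -
  have [measurable]: "mu \<in> borel_measurable (borel \<Otimes>\<^sub>M borel)"
    unfolding borel_prod by (rule mu)
  have G': "sets G = sets (borel \<Otimes>\<^sub>M borel)"
    unfolding borel_prod by (rule G)
  have "(\<lambda>x. fst x \<bullet> \<alpha> / (1 + mu x)) \<in> borel_measurable G"
    by (subst measurable_cong_sets[OF G' refl]) measurable
  moreover have "space G = UNIV"
    using sets_eq_imp_space_eq[OF G] by simp
  moreover have "(\<lambda>(w, B). w \<bullet> \<alpha> / (1 + mu (w, B))) = (\<lambda>x. fst x \<bullet> \<alpha> / (1 + mu x))"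
    by (simp add: case_prod_beta')
  ultimately show ?thesis
    unfolding Hdist_def lam_def by (simp add: measure_distr vimage_def)
qed

lemma Hdist_nonneg: "0 \<le> Hdist n G mu \<alpha> s"
  by (simp add: Hdist_def)

lemma Hdist_le_one:
  assumes "prob_space G" "sets G = sets borel" "mu \<in> borel_measurable borel"
  shows "Hdist n G mu \<alpha> s \<le> 1"
  using assms by (simp add: Hdist_eq_measure power_le_one prob_space.prob_le_1)

lemma borel_measurable_Hdist:
  fixes G :: "'d::finite buyer measure"
  assumes "prob_space G" and G: "sets G = sets borel" and mu: "mu \<in> borel_measurable borel"
  shows "(\<lambda>(\<alpha>, s). Hdist n G mu \<alpha> s) \<in> borel_measurable borel"
proof -
  interpret prob_space G by fact
  have [measurable]: "mu \<in> borel_measurable (borel \<Otimes>\<^sub>M borel)"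
    unfolding borel_prod by (rule mu)
  let ?Q = "{z :: ((real ^ 'd) \<times> real) \<times> 'd buyer. fst (snd z) \<bullet> fst (fst z) / (1 + mu (snd z)) \<le> snd (fst z)}"
  have "{z \<in> space ((borel \<Otimes>\<^sub>M borel) \<Otimes>\<^sub>M (borel \<Otimes>\<^sub>M borel)).
            fst (snd z) \<bullet> fst (fst z) / (1 + mu (snd z)) \<le> snd (fst z)}
        \<in> sets ((borel \<Otimes>\<^sub>M borel) \<Otimes>\<^sub>M (borel \<Otimes>\<^sub>M (borel :: real measure)))"
    by measurable
  then have "?Q \<in> sets ((borel \<Otimes>\<^sub>M borel) \<Otimes>\<^sub>M (borel \<Otimes>\<^sub>M borel))"
    by (simp add: space_pair_measure)
  moreover have "sets ((borel :: ((real ^ 'd) \<times> real) measure) \<Otimes>\<^sub>M G)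
      = sets ((borel \<Otimes>\<^sub>M borel) \<Otimes>\<^sub>M (borel \<Otimes>\<^sub>M borel))"
    by (rule sets_pair_measure_cong) (simp_all only: borel_prod G)
  ultimately have "?Q \<in> sets (borel \<Otimes>\<^sub>M G)"
    by simp
  from measurable_emeasure_Pair[OF this]
  have "(\<lambda>p. measure G (Pair p -` ?Q)) \<in> borel_measurable borel"
    unfolding measure_def by measurable
  moreover have "Pair p -` ?Q = {x. fst x \<bullet> fst p / (1 + mu x) \<le> snd p}" for p
    by auto
  ultimately show ?thesis
    by (simp add: Hdist_eq_measure[OF G mu] case_prod_beta)
qed

lemma abs_inner_div_one_plus_diff_le:
  fixes w w' a :: "'a::real_inner"
  assumes "t \<ge> 0" "t' \<ge> 0" and a: "norm a \<le> C" and w': "norm w' \<le> R"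
  shows "\<bar>w \<bullet> a / (1 + t) - w' \<bullet> a / (1 + t')\<bar> \<le> C * norm (w - w') + R * C * \<bar>t - t'\<bar>"
proof -
  have "w \<bullet> a / (1 + t) - w' \<bullet> a / (1 + t')
      = (w - w') \<bullet> a / (1 + t) + (w' \<bullet> a) * ((t' - t) / ((1 + t) * (1 + t')))"
    using assms by (simp add: inner_diff_left divide_simps) (simp add: algebra_simps)
  moreover have "\<bar>(w - w') \<bullet> a / (1 + t)\<bar> \<le> C * norm (w - w')"
  proof -
    have "\<bar>(w - w') \<bullet> a / (1 + t)\<bar> \<le> \<bar>(w - w') \<bullet> a\<bar>"
      using assms by (simp add: divide_le_eq mult_le_cancel_left1)
    also have "\<dots> \<le> norm (w - w') * norm a" by (rule Cauchy_Schwarz_ineq2)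
    also have "\<dots> \<le> C * norm (w - w')" using a by (simp add: mult_right_mono mult.commute)
    finally show ?thesis .
  qed
  moreover have "\<bar>(w' \<bullet> a) * ((t' - t) / ((1 + t) * (1 + t')))\<bar> \<le> R * C * \<bar>t - t'\<bar>"
  proof -
    have wa: "\<bar>w' \<bullet> a\<bar> \<le> R * C"
      using Cauchy_Schwarz_ineq2[of w' a] mult_mono[OF w' a] norm_ge_zero[of w'] norm_ge_zero[of a] w'
      by linarith
    moreover have "\<bar>(t' - t) / ((1 + t) * (1 + t'))\<bar> \<le> \<bar>t - t'\<bar>"
    proof -
      have "1 \<le> (1 + t) * (1 + t')" using assms by (simp add: algebra_simps)
      then show ?thesis using assms by (simp add: abs_minus_commute divide_le_eq mult_le_cancel_left1)
    qed
    ultimately show ?thesis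
      unfolding abs_mult by (rule mult_mono) (use wa in auto)
  qed
  ultimately show ?thesis by linarith
qed

lemma lipschitz_on_integral:
  fixes g :: "'p::metric_space \<Rightarrow> 'a \<Rightarrow> real"
  assumes "prob_space M" "0 \<le> L"
    and int: "\<And>p. p \<in> P \<Longrightarrow> integrable M (g p)"
    and lip: "\<And>p p'. p \<in> P \<Longrightarrow> p' \<in> P \<Longrightarrow> AE a in M. \<bar>g p a - g p' a\<bar> \<le> L * dist p p'"
  shows "L-lipschitz_on P (\<lambda>p. \<integral>a. g p a \<partial>M)"
proof (rule lipschitz_onI)
  interpret prob_space M by fact
  fix p p' assume p: "p \<in> P" and p': "p' \<in> P"
  have "dist (\<integral>a. g p a \<partial>M) (\<integral>a. g p' a \<partial>M) = \<bar>\<integral>a. g p a - g p' a \<partial>M\<bar>"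
    using int[OF p] int[OF p'] by (simp add: dist_real_def)
  also have "\<dots> \<le> (\<integral>a. \<bar>g p a - g p' a\<bar> \<partial>M)" by (rule integral_abs_bound)
  also have "\<dots> \<le> (\<integral>a. L * dist p p' \<partial>M)"
    using int[OF p] int[OF p'] lip[OF p p'] by (intro integral_mono_AE) auto
  also have "\<dots> = L * dist p p'" by (simp add: prob_space)
  finally show "dist (\<integral>a. g p a \<partial>M) (\<integral>a. g p' a \<partial>M) \<le> L * dist p p'" .
qed (fact)

lemma abs_set_integral_Hdist_diff_le:
  assumes "prob_space G" "sets G = sets borel" "mu \<in> borel_measurable borel"
  shows "\<bar>(LBINT s:{0..c}. Hdist n G mu \<alpha> s) - (LBINT s:{0..c'}. Hdist n G mu \<alpha> s)\<bar> \<le> \<bar>c - c'\<bar>"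
proof -
  have "(\<lambda>s. Hdist n G mu \<alpha> s) \<in> borel_measurable borel"
    using borel_measurable_Hdist[OF assms] by (simp add: borel_prod[symmetric])
  moreover have "\<bar>Hdist n G mu \<alpha> s\<bar> \<le> 1" for s
    using Hdist_nonneg[of n G mu \<alpha> s] Hdist_le_one[OF assms, of n \<alpha> s] by simp
  ultimately show ?thesis
    using set_integral_Icc_upper_lipschitz[where K=1] by simp
qed

lemma abs_set_integral_Hdist_le:
  assumes "prob_space G" "sets G = sets borel" "mu \<in> borel_measurable borel"
  shows "\<bar>LBINT s:{0..c}. Hdist n G mu \<alpha> s\<bar> \<le> \<bar>c\<bar>"
proof -
  have "(LBINT s:{0..0::real}. Hdist n G mu \<alpha> s) = 0"
    unfolding set_lebesgue_integral_def
    by (rule integral_eq_zero_AE, rule eventually_mono[OF AE_lborel_singleton[of 0]])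
       (auto simp: indicator_def)
  then show ?thesis
    using abs_set_integral_Hdist_diff_le[OF assms, where n=n and \<alpha>=\<alpha> and c=c and c'=0]
    by linarith
qed

lemma borel_measurable_set_integral_Hdist:
  fixes F :: "(real ^ 'd::finite) measure" and G :: "'d buyer measure"
  assumes "prob_space G" "sets G = sets borel" "mu \<in> borel_measurable borel"
    and F: "sets F = sets borel" and c [measurable]: "c \<in> borel_measurable borel"
  shows "(\<lambda>\<alpha>. LBINT s:{0..c \<alpha>}. Hdist n G mu \<alpha> s) \<in> borel_measurable F"
proof -
  have [measurable]: "(\<lambda>(\<alpha>, s). Hdist n G mu \<alpha> s) \<in> borel_measurable (borel \<Otimes>\<^sub>M borel)"
    unfolding borel_prod by (rule borel_measurable_Hdist[OF assms(1-3)])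
  have "(\<lambda>(\<alpha>, s). indicator {0..c \<alpha>} s *\<^sub>R Hdist n G mu \<alpha> s) \<in> borel_measurable (borel \<Otimes>\<^sub>M lborel)"
    unfolding measurable_cong_sets[OF sets_pair_measure_cong[OF refl sets_lborel] refl]
    by (simp add: indicator_def of_bool_def) measurable
  then show ?thesis
    unfolding set_lebesgue_integral_def measurable_cong_sets[OF F refl]
    by (rule lborel.borel_measurable_lebesgue_integral)
qed

lemma continuous_on_expected_Hdist_integral:
  fixes F :: "(real ^ 'd::finite) measure" and G :: "'d buyer measure"
  assumes F: "prob_space F" "sets F = sets borel" and F_bounded: "AE \<alpha> in F. norm \<alpha> \<le> C"
    and G: "prob_space G" "sets G = sets borel" and mu: "mu \<in> borel_measurable borel"
    and W: "bounded W" and T: "T \<subseteq> {0..}"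
  shows "continuous_on (W \<times> T)
           (\<lambda>(w, t). \<integral>\<alpha>. (LBINT s:{0..w \<bullet> \<alpha> / (1 + t)}. Hdist n G mu \<alpha> s) \<partial>F)"
proof -
  interpret F: prob_space F by fact
  obtain R where R: "0 < R" "\<forall>w\<in>W. norm w \<le> R"
    using W by (auto simp: bounded_pos)
  have "AE \<alpha> in F. 0 \<le> C"
    using F_bounded by eventually_elim (rule order_trans[OF norm_ge_zero])
  then have C: "0 \<le> C" by simp
  define c where "c p \<alpha> = fst p \<bullet> \<alpha> / (1 + snd p)" for p :: "(real ^ 'd) \<times> real" and \<alpha>
  define g where "g p \<alpha> = (LBINT s:{0..c p \<alpha>}. Hdist n G mu \<alpha> s)" for p \<alpha>
  have c_diff: "\<bar>c p \<alpha> - c p' \<alpha>\<bar> \<le> C * (1 + R) * dist p p'"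
    if "p \<in> W \<times> T" "p' \<in> W \<times> T" "norm \<alpha> \<le> C" for p p' \<alpha>
  proof -
    have "\<bar>c p \<alpha> - c p' \<alpha>\<bar> \<le> C * norm (fst p - fst p') + R * C * \<bar>snd p - snd p'\<bar>"
      unfolding c_def using that T R by (intro abs_inner_div_one_plus_diff_le) auto
    also have "\<dots> \<le> C * dist p p' + R * C * dist p p'"
      using C R dist_fst_le[of p p'] dist_snd_le[of p p']
      by (intro add_mono mult_left_mono) (auto simp: dist_norm)
    finally show ?thesis by (simp add: algebra_simps)
  qed
  have g_int: "integrable F (g p)" if "p \<in> W \<times> T" for p
  proof (rule F.integrable_const_bound)
    show "AE \<alpha> in F. norm (g p \<alpha>) \<le> C * R"
      using F_bounded
    proof eventually_elim
      case (elim \<alpha>)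
      have "\<bar>c p \<alpha> - 0 \<bullet> \<alpha> / (1 + snd p)\<bar> \<le> C * norm (fst p - 0) + R * C * \<bar>snd p - snd p\<bar>"
        unfolding c_def using that T R elim by (intro abs_inner_div_one_plus_diff_le) auto
      moreover have "C * norm (fst p) \<le> C * R"
        using that R C by (intro mult_left_mono) auto
      ultimately show ?case
        using abs_set_integral_Hdist_le[OF G mu, where n=n and c="c p \<alpha>" and \<alpha>=\<alpha>]
        by (simp add: g_def)
    qed
    show "g p \<in> borel_measurable F"
      unfolding g_def c_def using G mu F(2) by (rule borel_measurable_set_integral_Hdist) simp
  qed
  have "(C * (1 + R))-lipschitz_on (W \<times> T) (\<lambda>p. \<integral>\<alpha>. g p \<alpha> \<partial>F)"
  proof (rule lipschitz_on_integral[OF F(1) _ g_int])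
    show "AE \<alpha> in F. \<bar>g p \<alpha> - g p' \<alpha>\<bar> \<le> C * (1 + R) * dist p p'"
      if "p \<in> W \<times> T" "p' \<in> W \<times> T" for p p'
      using F_bounded
    proof eventually_elim
      case (elim \<alpha>)
      then show ?case
        using abs_set_integral_Hdist_diff_le[OF G mu, where n=n and c="c p \<alpha>" and c'="c p' \<alpha>" and \<alpha>=\<alpha>] c_diff[OF that elim]
        by (simp add: g_def)
    qed
  qed (use C R in auto)
  from lipschitz_on_continuous_on[OF this] show ?thesis
    by (simp add: g_def c_def case_prod_beta')
qed

lemma continuous_on_qdual:
  fixes F :: "(real ^ 'd::finite) measure" and G :: "'d buyer measure"
  assumes F: "prob_space F" "sets F = sets borel" "AE \<alpha> in F. norm \<alpha> \<le> C"
    and G: "prob_space G" "sets G = sets borel" and mu: "mu \<in> borel_measurable borel"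
    and S: "bounded S" and T: "T \<subseteq> {0..}"
  shows "continuous_on (S \<times> T) (\<lambda>(x, t). qdual n F G mu x t)"
proof -
  define \<Phi> where "\<Phi> = (\<lambda>(w, t). \<integral>\<alpha>. (LBINT s:{0..w \<bullet> \<alpha> / (1 + t)}. Hdist n G mu \<alpha> s) \<partial>F)"
  have "continuous_on (fst ` S \<times> T) \<Phi>"
    unfolding \<Phi>_def using F G mu bounded_fst[OF S] T by (rule continuous_on_expected_Hdist_integral)
  then have "continuous_on (S \<times> T) (\<lambda>p. \<Phi> (fst (fst p), snd p))"
    by (rule continuous_on_compose2) (auto intro!: continuous_intros)
  then have "continuous_on (S \<times> T) (\<lambda>p. (1 + snd p) * \<Phi> (fst (fst p), snd p) + snd p * snd (fst p))"
    by (intro continuous_intros)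
  moreover have "qdual n F G mu x t = (1 + t) * \<Phi> (fst x, t) + t * snd x" for x t
    by (simp add: qdual_def \<Phi>_def split: prod.splits)
  ultimately show ?thesis
    by (simp add: case_prod_beta')
qed

lemma norm_le_of_valuation_bound:
  fixes \<alpha> :: "real ^ 'd::finite"
  assumes U: "U > 0" and pos: "\<forall>i. \<alpha> $ i > 0" and bound: "\<forall>w\<in>Theta_w U. w \<bullet> \<alpha> \<le> \<omega>"
  shows "norm \<alpha> \<le> 2 * \<omega> / U"
proof -
  have "(\<chi> i. U / 2) \<in> Theta_w U"
    using U by (simp add: Theta_w_def)
  with bound have "U / 2 * (\<Sum>i\<in>UNIV. \<alpha> $ i) \<le> \<omega>"
    by (force simp: inner_vec_def sum_distrib_left)
  moreover have "norm \<alpha> \<le> (\<Sum>i\<in>UNIV. \<alpha> $ i)"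
    using norm_le_l1_cart[of \<alpha>] pos by (simp add: less_imp_le)
  ultimately have "U * norm \<alpha> \<le> 2 * \<omega>"
    using mult_left_mono[of "norm \<alpha>" "\<Sum>i\<in>UNIV. \<alpha> $ i" U] U by linarith
  then show ?thesis
    using U by (simp add: field_simps)
qed

theorem mainTheorem15:
  fixes n :: nat and U Bmin \<omega> :: real
    and A :: "(real ^ 'd::finite) set"
    and F :: "(real ^ 'd) measure" and G :: "'d buyer measure"
    and mu :: "'d buyer \<Rightarrow> real"
  assumes n: "n \<ge> 2" and d: "CARD('d) \<ge> 2"
    and U: "U > 0" and Bmin: "Bmin > 0"
    and A_pos: "\<forall>\<alpha>\<in>A. \<forall>i. \<alpha> $ i > 0"
    and F_prob: "prob_space F" and F_dens: "\<exists>f. f \<in> borel_measurable lborel \<and> F = density lborel f"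
    and F_on_A: "AE \<alpha> in F. \<alpha> \<in> A"
    and G_prob: "prob_space G" and G_dens: "\<exists>g. g \<in> borel_measurable lborel \<and> G = density lborel g"
    and G_on_Theta: "AE x in G. x \<in> Theta U Bmin"
    and omega: "\<omega> > 0" "\<forall>w\<in>Theta_w U. \<forall>\<alpha>\<in>A. w \<bullet> \<alpha> \<le> \<omega>"
    and supp_convex: "convex (supp G)" and supp_compact: "compact (supp G)"
    and supp_nonneg: "\<forall>(w, B)\<in>supp G. (\<forall>i. w $ i \<ge> 0) \<and> B \<ge> 0"
    and mu_meas: "mu \<in> borel_measurable borel"
    and mu_range: "\<forall>x\<in>Theta U Bmin \<union> supp G. mu x \<in> {0..\<omega> / Bmin}"
    and mu_unique_min: "\<forall>x\<in>supp G. \<forall>t\<in>{0..\<omega> / Bmin}. t \<noteq> mu x \<longrightarrow>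
                          qdual n F G mu x (mu x) < qdual n F G mu x t"
  shows "continuous_on (supp G) mu"
proof -
  have sF: "sets F = sets borel" and sG: "sets G = sets borel"
    using F_dens G_dens by auto
  have "AE \<alpha> in F. norm \<alpha> \<le> 2 * \<omega> / U"
    using F_on_A
  proof (rule eventually_mono)
    show "\<alpha> \<in> A \<Longrightarrow> norm \<alpha> \<le> 2 * \<omega> / U" for \<alpha>
      using A_pos omega(2) by (intro norm_le_of_valuation_bound[OF U]) auto
  qed
  then have "continuous_on (supp G \<times> {0..\<omega> / Bmin}) (\<lambda>(x, t). qdual n F G mu x t)"
    by (rule continuous_on_qdual[OF F_prob sF _ G_prob sG mu_meas compact_imp_bounded[OF supp_compact]])
      simp
  then show ?thesis
  proof (rule continuous_on_unique_argmin[OF compact_Icc])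
    show "mu \<in> supp G \<rightarrow> {0..\<omega> / Bmin}"
      using mu_range by blast
  qed (use mu_unique_min in blast)
qed

end
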